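(* Let $1\le p\le\infty$ and $1\le q<\infty$. The function $f:[0,1]\to\mathbb{R}$, $f(x)=x$, belongs to $\mathcal{H}_{1,p}$, but not to $\mathcal{H}_{\mathrm{wav},\alpha,p,q}$ for any $\alpha\ge1$. Thus $\mathcal{H}_{1,p}$ is not included in $\mathcal{H}_{\mathrm{wav},\alpha,p,q}$ for any $\alpha\ge1$.
   Context: $\mathcal{H}_{1,p}$ is the space of functions $f:[0,1]\to\mathbb{R}$ of the form $f(x)=c+\int_0^x\tilde f(t)\,dt$ with $c\in\mathbb{R}$ and $\tilde f\in L_p([0,1])$. Haar wavelet space for a fixed integer base $b\ge2$: $\Delta_{-1}=\{0\}$, $\Delta_j=\{0,\dots,b^j-1\}$ ($j\in\mathbb{N}_0$), $\nabla_0=\{0\}$, $\nabla_j=\{0,\dots,b-1\}$ ($j\ge1$); $\psi^0_{0,0}=1_{[0,1)}$ and for $j\ge1$, $i\in\nabla_j$, $k\in\Delta_{j-1}$: $\psi^j_{i,k}(x)=b^{j/2-1}(b\,1_{[b^{-j}(bk+i),b^{-j}(bk+i+1))}(x)-1_{[b^{1-j}k,b^{1-j}(k+1))}(x))$. For $q<\infty$, $\mathcal{H}_{\mathrm{wav},\alpha,p,q}$ is the space of $f\in L_1([0,1])$ with $\sum_{j=0}^\infty b^{q(\alpha-1/p+1/2)j}\big(\sum_{k\in\Delta_{j-1}}\sum_{i\in\nabla_j}|\int_0^1f\psi^j_{i,k}|^p\big)^{q/p}<\infty$ (inner $\ell_p$-sum replaced by a maximum if $p=\infty$). *)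

theory Defs
  imports "HOL-Analysis.Analysis"
begin

definition Lp01 :: "ereal \<Rightarrow> (real \<Rightarrow> real) \<Rightarrow> bool" where
  "Lp01 p g \<longleftrightarrow> set_borel_measurable lebesgue {0..1} g \<and>
     (if p = \<infinity> then (\<exists>C. AE x in lebesgue. x \<in> {0..1} \<longrightarrow> \<bar>g x\<bar> \<le> C)
      else set_integrable lebesgue {0..1} (\<lambda>x. \<bar>g x\<bar> powr real_of_ereal p))"

definition H1p :: "ereal \<Rightarrow> (real \<Rightarrow> real) set" where
  "H1p p = {f. \<exists>c g. Lp01 p g \<and>
     (\<forall>x\<in>{0..1}. f x = c + (LINT t:{0..x}|lebesgue. g t))}"

text \<open>Index sets Delta_j (here indexed by j-1 via Delta_prev j = Delta_{j-1}) and nabla_j.\<close>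
definition Delta_prev :: "nat \<Rightarrow> nat \<Rightarrow> nat set" where
  "Delta_prev b j = (if j = 0 then {0} else {0..<b ^ (j - 1)})"

definition Nabla :: "nat \<Rightarrow> nat \<Rightarrow> nat set" where
  "Nabla b j = (if j = 0 then {0} else {0..<b})"

definition haar :: "nat \<Rightarrow> nat \<Rightarrow> nat \<Rightarrow> nat \<Rightarrow> real \<Rightarrow> real" where
  "haar b j i k x =
    (if j = 0 then indicator {0..<1} x
     else real b powr (real j / 2 - 1) *
       (real b * indicator {real (b * k + i) / real b ^ j ..< real (b * k + i + 1) / real b ^ j} x
        - indicator {real k / real b ^ (j - 1) ..< real (k + 1) / real b ^ (j - 1)} x))"

definition haar_coeff :: "nat \<Rightarrow> (real \<Rightarrow> real) \<Rightarrow> nat \<Rightarrow> nat \<Rightarrow> nat \<Rightarrow> real" where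
  "haar_coeff b f j i k = (LINT x:{0..1}|lebesgue. f x * haar b j i k x)"

definition wav_term :: "nat \<Rightarrow> real \<Rightarrow> ereal \<Rightarrow> real \<Rightarrow> (real \<Rightarrow> real) \<Rightarrow> nat \<Rightarrow> real" where
  "wav_term b \<alpha> p q f j =
    (if p = \<infinity> then
       real b powr (q * (\<alpha> + 1/2) * real j) *
       (Max {\<bar>haar_coeff b f j i k\<bar> | i k. k \<in> Delta_prev b j \<and> i \<in> Nabla b j}) powr q
     else
       real b powr (q * (\<alpha> - 1 / real_of_ereal p + 1/2) * real j) *
       (\<Sum>k\<in>Delta_prev b j. \<Sum>i\<in>Nabla b j. \<bar>haar_coeff b f j i k\<bar> powr real_of_ereal p)
         powr (q / real_of_ereal p))"

text \<open>The Haar wavelet space H_{wav,alpha,p,q} (q finite): a series of nonnegative terms is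
  finite iff it is summable.\<close>
definition Hwav :: "nat \<Rightarrow> real \<Rightarrow> ereal \<Rightarrow> real \<Rightarrow> (real \<Rightarrow> real) set" where
  "Hwav b \<alpha> p q = {f. set_integrable lebesgue {0..1} f \<and> summable (wav_term b \<alpha> p q f)}"

end

theory Submission
  imports Defs
begin

(* The identity has the Haar coefficients (2i + 1 - b)/2 * b^(-3j/2) at level j, independently
   of the position k.  In particular the b^(j-1) coefficients with i = 0 have modulus
   (b - 1)/2 * b^(-3j/2), so the j-th term of the wavelet series is at least a constant times
   b^(q(alpha - 1)j), which does not tend to 0 when alpha >= 1.  On the other hand
   x = int_0^x 1 dt, so the identity lies in H_{1,p} for every p. *)

lemma has_integral_id_indicator:
  fixes a c :: real
  assumes "a \<le> c" "{a..<c} \<subseteq> S"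
  shows "((\<lambda>x. x * indicator {a..<c} x) has_integral (c\<^sup>2 - a\<^sup>2) / 2) S"
proof -
  have "((\<lambda>x. x) has_integral (c\<^sup>2 / 2 - a\<^sup>2 / 2)) {a..c}"
    by (rule fundamental_theorem_of_calculus[OF assms(1)])
      (auto intro!: derivative_eq_intros simp flip: has_real_derivative_iff_has_vector_derivative)
  moreover have "negligible {x \<in> {a..c} - {a..<c}. x \<noteq> 0}"
    by (rule negligible_subset[of "{c}"]) auto
  ultimately have "((\<lambda>x. x) has_integral (c\<^sup>2 - a\<^sup>2) / 2) {a..<c}"
    by (subst has_integral_spike_set_eq[where T = "{a..c}"]) (auto simp: diff_divide_distrib intro: empty_imp_negligible)
  moreover have "(\<lambda>x. x * indicator {a..<c} x) = (\<lambda>x. if x \<in> {a..<c} then x else 0)"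
    by (auto simp: indicator_def)
  ultimately show ?thesis
    by (simp only: has_integral_restrict[OF assms(2)])
qed

lemma haar_coeff_id:
  fixes b j i k :: nat
  assumes "0 < b" "1 \<le> j" "i < b" "k < b ^ (j - 1)"
  shows "haar_coeff b (\<lambda>x. x) j i k = (2 * real i + 1 - real b) / 2 * real b powr (-(3/2) * real j)"
proof -
  define B where "B = real b"
  define a1 where "a1 = real (b * k + i) / B ^ j"
  define c1 where "c1 = real (b * k + i + 1) / B ^ j"
  define a2 where "a2 = real k / B ^ (j - 1)"
  define c2 where "c2 = real (k + 1) / B ^ (j - 1)"
  define m where "m = B powr (real j / 2 - 1)"
  have bj: "b ^ j = b * b ^ (j - 1)"
    using assms(2) by (simp add: power_eq_if)
  then have B: "B > 0" "B ^ j = B * B ^ (j - 1)"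
    using assms(1) unfolding B_def of_nat_power[symmetric] by simp_all
  have "b * k + i + 1 \<le> b ^ j" "k + 1 \<le> b ^ (j - 1)"
    using assms mult_le_mono2[of "k + 1" "b ^ (j - 1)" b] unfolding bj by simp_all
  then have "real (b * k + i + 1) \<le> B ^ j" "real (k + 1) \<le> B ^ (j - 1)"
    unfolding B_def of_nat_power[symmetric] of_nat_le_iff .
  then have "0 \<le> a1" "a1 \<le> c1" "c1 \<le> 1" "0 \<le> a2" "a2 \<le> c2" "c2 \<le> 1"
    using B by (auto simp: a1_def c1_def a2_def c2_def divide_simps)
  then have I1: "0 \<le> a1" "a1 \<le> c1" "{a1..<c1} \<subseteq> {0..1}"
    and I2: "0 \<le> a2" "a2 \<le> c2" "{a2..<c2} \<subseteq> {0..1}"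
    by auto
  define V where "V = m * (B * ((c1\<^sup>2 - a1\<^sup>2) / 2) - (c2\<^sup>2 - a2\<^sup>2) / 2)"
  have haar: "x * haar b j i k x = m * (B * (x * indicator {a1..<c1} x) - x * indicator {a2..<c2} x)" for x
    using assms unfolding haar_def m_def a1_def c1_def a2_def c2_def B_def by (simp add: algebra_simps)
  have id_indicator_integrable: "(\<lambda>x. x * indicator {a..<c} x) absolutely_integrable_on {0..1}"
    if "0 \<le> a" "a \<le> c" "{a..<c} \<subseteq> {0..1}" for a c :: real
    using has_integral_id_indicator[OF that(2,3)] that(1)
    by (intro nonnegative_absolutely_integrable_1) (auto simp: has_integral_integrable indicator_def)
  have "(\<lambda>x. x * haar b j i k x) absolutely_integrable_on {0..1}"
    unfolding haar using I1 I2 id_indicator_integrable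
    by (intro set_integrable_mult_right set_integral_diff(1))
  moreover have "((\<lambda>x. x * haar b j i k x) has_integral V) {0..1}"
    unfolding haar V_def using I1 I2
    by (intro has_integral_mult_right has_integral_diff has_integral_id_indicator)
  ultimately have "haar_coeff b (\<lambda>x. x) j i k = V"
    unfolding haar_coeff_def by (simp add: set_lebesgue_integral_eq_integral(2) integral_unique)
  also have "V = (2 * real i + 1 - B) / 2 * (m * B / B ^ (2 * j))"
    unfolding V_def a1_def c1_def a2_def c2_def using B
    by (simp add: field_simps power2_eq_square power_mult B_def)
  also have "m * B / B ^ (2 * j) = B powr (-(3/2) * real j)"
  proof -
    have "m * B / B ^ (2 * j) = B powr (real j / 2 - 1) * B powr 1 / B powr real (2 * j)"
      using B(1) powr_realpow[OF B(1), of "2 * j"] by (simp add: m_def)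
    also have "\<dots> = B powr (real j / 2 - 1 + 1 - real (2 * j))"
      by (simp only: powr_add powr_diff)
    finally show ?thesis
      by simp
  qed
  finally show ?thesis by (simp add: B_def)
qed

lemma wav_term_lower_bound:
  fixes f :: "real \<Rightarrow> real"
  assumes "1 \<le> b" "1 \<le> j" "1 \<le> p" "0 \<le> q" "0 \<le> c"
    and coeff: "\<And>k. k < b ^ (j - 1) \<Longrightarrow> c \<le> \<bar>haar_coeff b f j 0 k\<bar>"
  shows "real b powr (q * (\<alpha> + 1/2) * real j - q) * c powr q \<le> wav_term b \<alpha> p q f j"
proof -
  define B where "B = real b"
  define E where "E = q * (\<alpha> + 1/2) * real j"
  have B: "1 \<le> B" "0 < B"
    using assms(1) by (simp_all add: B_def)
  have index_sets: "Delta_prev b j = {0..<b ^ (j - 1)}" "Nabla b j = {0..<b}"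
    using assms(2) by (simp_all add: Delta_prev_def Nabla_def)
  have weaken: "B powr (E - q) * c powr q \<le> B powr (E - e) * c powr q" if "e \<le> q" for e
    using B that by (intro mult_right_mono powr_mono) auto
  show ?thesis
  proof (cases "p = \<infinity>")
    case True
    define A where "A = {\<bar>haar_coeff b f j i k\<bar> | i k. k \<in> Delta_prev b j \<and> i \<in> Nabla b j}"
    have "A = (\<lambda>(i, k). \<bar>haar_coeff b f j i k\<bar>) ` (Nabla b j \<times> Delta_prev b j)"
      unfolding A_def by auto
    then have "finite A"
      by (simp add: index_sets)
    have "\<bar>haar_coeff b f j 0 0\<bar> \<in> A"
      unfolding A_def index_sets using assms(1) by force
    with \<open>finite A\<close> have "\<bar>haar_coeff b f j 0 0\<bar> \<le> Max A"
      by (rule Max_ge)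
    then have "c \<le> Max A"
      using coeff[of 0] assms(1) by simp
    then have "B powr (E - 0) * c powr q \<le> B powr E * Max A powr q"
      using assms(4,5) by (simp add: mult_left_mono powr_mono2)
    also have "\<dots> = wav_term b \<alpha> p q f j"
      using True by (simp add: wav_term_def A_def B_def E_def)
    finally show ?thesis
      using weaken[of 0] assms(4) by (simp add: B_def E_def)
  next
    case False
    define P where "P = real_of_ereal p"
    have P: "1 \<le> P"
      using assms(3) False unfolding P_def by (cases p) auto
    define S where "S = (\<Sum>k\<in>Delta_prev b j. \<Sum>i\<in>Nabla b j. \<bar>haar_coeff b f j i k\<bar> powr P)"
    have "(\<Sum>k\<in>Delta_prev b j. c powr P) \<le> S"
      unfolding S_def
    proof (rule sum_mono)
      fix k assume "k \<in> Delta_prev b j"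
      then have "c powr P \<le> \<bar>haar_coeff b f j 0 k\<bar> powr P"
        using coeff assms(5) P by (simp add: index_sets powr_mono2)
      also have "\<dots> \<le> (\<Sum>i\<in>Nabla b j. \<bar>haar_coeff b f j i k\<bar> powr P)"
        using assms(1) by (intro member_le_sum) (auto simp: index_sets)
      finally show "c powr P \<le> (\<Sum>i\<in>Nabla b j. \<bar>haar_coeff b f j i k\<bar> powr P)" .
    qed
    then have "B ^ (j - 1) * c powr P \<le> S"
      by (simp add: index_sets B_def)
    then have "(B ^ (j - 1) * c powr P) powr (q / P) \<le> S powr (q / P)"
      using B assms(4) P by (intro powr_mono2) auto
    moreover have "(B ^ (j - 1) * c powr P) powr (q / P) = B powr ((real j - 1) * q / P) * c powr q"
      using B assms(2,5) P by (simp add: powr_mult powr_powr powr_realpow [symmetric])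
    ultimately have S_ge: "B powr ((real j - 1) * q / P) * c powr q \<le> S powr (q / P)"
      by simp
    \<comment> \<open>The b^(j-1) positions k cancel the factor b^(-qj/p) of the weight up to b^(-q/p).\<close>
    have "B powr (E - q / P) * c powr q
        = B powr (q * (\<alpha> - 1 / P + 1/2) * real j) * (B powr ((real j - 1) * q / P) * c powr q)"
      by (simp add: E_def powr_add [symmetric] algebra_simps diff_divide_distrib add_divide_distrib)
    also have "\<dots> \<le> B powr (q * (\<alpha> - 1 / P + 1/2) * real j) * S powr (q / P)"
      using S_ge by (simp add: mult_left_mono)
    also have "\<dots> = wav_term b \<alpha> p q f j"
      using False by (simp add: wav_term_def S_def P_def B_def)
    finally have "B powr (E - q / P) * c powr q \<le> wav_term b \<alpha> p q f j" .
    moreover have "q / P \<le> q"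
      using P assms(4) by (simp add: divide_le_eq) (metis mult_left_mono mult.right_neutral)
    ultimately show ?thesis
      using weaken by (force simp: B_def E_def)
  qed
qed

lemma wav_term_id_lower_bound:
  assumes "1 \<le> b" "1 \<le> j" "1 \<le> p" "0 \<le> q"
  shows "((real b - 1) / 2) powr q * real b powr (q * (\<alpha> - 1) * real j - q) \<le> wav_term b \<alpha> p q (\<lambda>x. x) j"
proof -
  define c where "c = (real b - 1) / 2 * real b powr (-(3/2) * real j)"
  have "c \<ge> 0"
    using assms(1) by (simp add: c_def)
  moreover have "haar_coeff b (\<lambda>x. x) j 0 k = - c" if "k < b ^ (j - 1)" for k
    using haar_coeff_id[of b j 0 k] assms that by (simp add: c_def field_simps)
  ultimately have "\<bar>haar_coeff b (\<lambda>x. x) j 0 k\<bar> = c" if "k < b ^ (j - 1)" for k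
    using that by simp
  then have "real b powr (q * (\<alpha> + 1/2) * real j - q) * c powr q \<le> wav_term b \<alpha> p q (\<lambda>x. x) j"
    using assms \<open>c \<ge> 0\<close> by (intro wav_term_lower_bound) auto
  also have "c powr q = ((real b - 1) / 2) powr q * real b powr (-(3/2) * real j * q)"
    unfolding c_def using assms(1) by (subst powr_mult) (auto simp: powr_powr)
  also have "real b powr (q * (\<alpha> + 1/2) * real j - q) * (((real b - 1) / 2) powr q * real b powr (-(3/2) * real j * q))
      = ((real b - 1) / 2) powr q * (real b powr (q * (\<alpha> + 1/2) * real j - q) * real b powr (-(3/2) * real j * q))"
    by (simp only: ac_simps)
  also have "real b powr (q * (\<alpha> + 1/2) * real j - q) * real b powr (-(3/2) * real j * q)
      = real b powr (q * (\<alpha> - 1) * real j - q)"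
    by (simp add: powr_add [symmetric] algebra_simps)
  finally show ?thesis .
qed

lemma id_notin_Hwav:
  assumes "2 \<le> b" "1 \<le> p" "0 \<le> q" "1 \<le> \<alpha>"
  shows "(\<lambda>x. x) \<notin> Hwav b \<alpha> p q"
proof
  define K where "K = ((real b - 1) / 2) powr q * real b powr (- q)"
  assume "(\<lambda>x. x) \<in> Hwav b \<alpha> p q"
  then have "wav_term b \<alpha> p q (\<lambda>x. x) \<longlonglongrightarrow> 0"
    unfolding Hwav_def by (auto intro: summable_LIMSEQ_zero)
  moreover have "K \<le> wav_term b \<alpha> p q (\<lambda>x. x) j" if "1 \<le> j" for j
  proof -
    have "real b powr (- q) \<le> real b powr (q * (\<alpha> - 1) * real j - q)"
      using assms by (intro powr_mono) auto
    then have "K \<le> ((real b - 1) / 2) powr q * real b powr (q * (\<alpha> - 1) * real j - q)"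
      unfolding K_def by (simp add: mult_left_mono)
    also have "\<dots> \<le> wav_term b \<alpha> p q (\<lambda>x. x) j"
      using assms that by (intro wav_term_id_lower_bound) auto
    finally show ?thesis .
  qed
  ultimately have "K \<le> 0"
    by (intro LIMSEQ_le_const) auto
  moreover have "0 < K"
    using assms(1) by (simp add: K_def)
  ultimately show False
    by simp
qed

lemma id_in_H1p: "(\<lambda>x. x) \<in> H1p p"
proof -
  have "(\<lambda>_. 1::real) absolutely_integrable_on {0..1::real}"
    by (rule absolutely_integrable_on_const) simp
  then have "Lp01 p (\<lambda>_. 1)"
    unfolding Lp01_def set_borel_measurable_def set_integrable_def
    by (auto intro: borel_measurable_integrable)
  moreover have "(LINT t:{0..x}|lebesgue. 1) = x" if "0 \<le> x" for x :: real
    using that by (simp add: set_integral_const)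
  ultimately show ?thesis
    unfolding H1p_def by (auto intro!: exI[of _ 0] exI[of _ "\<lambda>_. 1"])
qed

theorem proposition1:
  fixes b :: nat and p :: ereal and q :: real
  assumes "b \<ge> 2" and "1 \<le> p" and "1 \<le> q"
  shows "(\<lambda>x. x) \<in> H1p p \<and> (\<forall>\<alpha>::real. \<alpha> \<ge> 1 \<longrightarrow> (\<lambda>x. x) \<notin> Hwav b \<alpha> p q)
         \<and> (\<forall>\<alpha>::real. \<alpha> \<ge> 1 \<longrightarrow> \<not> H1p p \<subseteq> Hwav b \<alpha> p q)"
  using id_in_H1p[of p] id_notin_Hwav[of b p q] assms by auto

end
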